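(* Let $(T,D)$ be a predominated tree. (i) $(T,D)$ is MBD critical if and only if there exists a substructure $F\in\mathcal S$ in $T$ such that $D=V(T)\setminus X(F)$. (ii) $(T,D)$ is an atomic MBD critical graph if and only if $T\in\mathcal S$ and $D=V(T)\setminus X(T)$.
   Context: A predominated graph is a pair $(G,D)$ with $G$ a finite simple graph and $D\subseteq V(G)$. In the MBD game on $(G,D)$, Staller and Dominator alternately claim unclaimed vertices of $V(G)$ (including vertices of $D$), Staller first, until all are claimed; Staller wins if she claims all of $N_G[v]$ for some $v\in V(G)\setminus D$, Dominator wins otherwise. $(G,D)$ is MBD critical if Staller wins on $(G,D)$ but Dominator wins on $(G,D\cup\{v\})$ for every $v\in V(G)\setminus D$. $(G,D)$ is atomic MBD critical if it is MBD critical, $D$ is an independent set of $G$, and no vertex of $D$ is isolated in $G$. For a tree $T'$, $S(T')$ is obtained by subdividing each edge of $T'$ exactly once; $\mathcal S=\{S(T'):T'\text{ a tree}\}$ and $X(S(T'))=V(T')$ (with $S(P_1)=P_1$, $X(P_1)=V(P_1)$). $F\in\mathcal S$ is a substructure in $G$ if $F$ is a subgraph of $G$ and $\deg_G(v)=\deg_F(v)$ for all $v\in X(F)$. *)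

theory Defs
  imports Main
begin

definition simple_graph :: "'a set \<Rightarrow> 'a set set \<Rightarrow> bool" where
  "simple_graph V E \<longleftrightarrow> finite V \<and>
     (\<forall>e\<in>E. \<exists>u v. e = {u, v} \<and> u \<noteq> v \<and> u \<in> V \<and> v \<in> V)"

definition adj :: "'a set set \<Rightarrow> 'a \<Rightarrow> 'a \<Rightarrow> bool" where
  "adj E u v \<longleftrightarrow> {u, v} \<in> E"

definition nbhd :: "'a set set \<Rightarrow> 'a \<Rightarrow> 'a set" where
  "nbhd E v = {u. {u, v} \<in> E}"

definition closed_nbhd :: "'a set set \<Rightarrow> 'a \<Rightarrow> 'a set" where
  "closed_nbhd E v = insert v (nbhd E v)"

definition degree :: "'a set set \<Rightarrow> 'a \<Rightarrow> nat" where
  "degree E v = card (nbhd E v)"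

definition walk :: "'a set \<Rightarrow> 'a set set \<Rightarrow> 'a list \<Rightarrow> bool" where
  "walk V E p \<longleftrightarrow> p \<noteq> [] \<and> set p \<subseteq> V \<and>
     (\<forall>i. Suc i < length p \<longrightarrow> adj E (p ! i) (p ! Suc i))"

definition connected_graph :: "'a set \<Rightarrow> 'a set set \<Rightarrow> bool" where
  "connected_graph V E \<longleftrightarrow> V \<noteq> {} \<and>
     (\<forall>u\<in>V. \<forall>v\<in>V. \<exists>p. walk V E p \<and> hd p = u \<and> last p = v)"

definition is_cycle :: "'a set \<Rightarrow> 'a set set \<Rightarrow> 'a list \<Rightarrow> bool" where
  "is_cycle V E c \<longleftrightarrow> length c \<ge> 3 \<and> distinct c \<and> walk V E c \<and> adj E (last c) (hd c)"

definition acyclic_graph :: "'a set \<Rightarrow> 'a set set \<Rightarrow> bool" where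
  "acyclic_graph V E \<longleftrightarrow> \<not> (\<exists>c. is_cycle V E c)"

definition tree :: "'a set \<Rightarrow> 'a set set \<Rightarrow> bool" where
  "tree V E \<longleftrightarrow> simple_graph V E \<and> connected_graph V E \<and> acyclic_graph V E"

text \<open>Staller wins at the end iff she claimed
  the closed neighbourhood of some vertex outside D.  sw turn n S Dm: Staller's
  set S, Dominator's set Dm, turn = True means Staller moves, n is the fuel.\<close>

definition staller_goal :: "'a set \<Rightarrow> 'a set set \<Rightarrow> 'a set \<Rightarrow> 'a set \<Rightarrow> bool" where
  "staller_goal V E D S \<longleftrightarrow> (\<exists>v\<in>V - D. closed_nbhd E v \<subseteq> S)"

fun sw :: "'a set \<Rightarrow> 'a set set \<Rightarrow> 'a set \<Rightarrow> bool \<Rightarrow> nat \<Rightarrow> 'a set \<Rightarrow> 'a set \<Rightarrow> bool" where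
  "sw V E D t 0 S Dm = staller_goal V E D S"
| "sw V E D True (Suc n) S Dm =
     (if V - S - Dm = {} then staller_goal V E D S
      else (\<exists>u\<in>V - S - Dm. sw V E D False n (insert u S) Dm))"
| "sw V E D False (Suc n) S Dm =
     (if V - S - Dm = {} then staller_goal V E D S
      else (\<forall>u\<in>V - S - Dm. sw V E D True n S (insert u Dm)))"

definition staller_wins :: "'a set \<Rightarrow> 'a set set \<Rightarrow> 'a set \<Rightarrow> bool" where
  "staller_wins V E D \<longleftrightarrow> sw V E D True (card V) {} {}"

definition mbd_critical :: "'a set \<Rightarrow> 'a set set \<Rightarrow> 'a set \<Rightarrow> bool" where
  "mbd_critical V E D \<longleftrightarrow> staller_wins V E D \<and>
     (\<forall>v\<in>V - D. \<not> staller_wins V E (insert v D))"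

definition atomic_mbd_critical :: "'a set \<Rightarrow> 'a set set \<Rightarrow> 'a set \<Rightarrow> bool" where
  "atomic_mbd_critical V E D \<longleftrightarrow> mbd_critical V E D \<and>
     (\<forall>u\<in>D. \<forall>v\<in>D. {u, v} \<notin> E) \<and> (\<forall>d\<in>D. \<exists>u. {u, d} \<in> E)"

text \<open>(VF, EF) is S(T') for a tree T' on vertex set X, where the original vertices keep
  their names and the subdivision vertex of edge e of T' is m e.  Then X(F) = X.\<close>
definition subdivided_tree :: "'a set \<Rightarrow> 'a set set \<Rightarrow> 'a set \<Rightarrow> bool" where
  "subdivided_tree VF EF X \<longleftrightarrow> X \<subseteq> VF \<and>
     (\<exists>E' m. tree X E' \<and> bij_betw m E' (VF - X) \<and>
        EF = (\<Union>e\<in>E'. (\<lambda>a. {a, m e}) ` e))"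

definition substructure :: "'a set \<Rightarrow> 'a set set \<Rightarrow> 'a set \<Rightarrow> 'a set set \<Rightarrow> 'a set \<Rightarrow> bool" where
  "substructure V E VF EF X \<longleftrightarrow> subdivided_tree VF EF X \<and> VF \<subseteq> V \<and> EF \<subseteq> E \<and>
     (\<forall>v\<in>X. degree E v = degree EF v)"

end

theory Submission
  imports Defs
begin

text \<open>Call X \<subseteq> U a skeleton if it is nonempty and independent and every vertex of U adjacent
  to X has exactly two neighbours in X.  On a tree, Staller wins (T, D) iff some skeleton of V
  avoids D.  If X(F) of a substructure F avoids D, Staller claims the subdivision vertex of the
  last edge at a leaf of the remaining subtree of F, which forces Dominator onto that leaf, until
  a leaf with all its subdivision vertices claimed is left.  Conversely, if no skeleton of the free
  vertices avoids the dominated vertices, Dominator answers a move u by the unique neighbour of u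
  that carries a skeleton in its own component of the remaining free vertices (uniqueness comes
  from acyclicity); this keeps every skeleton away.  Finally, contracting the neighbours of a
  minimal skeleton of a tree gives a tree whose subdivision is a substructure, so criticality
  pins D down to the complement of X(F).\<close>

section \<open>Graphs\<close>

lemma walk_iff_successively:
  "walk V E p \<longleftrightarrow> p \<noteq> [] \<and> set p \<subseteq> V \<and> successively (adj E) p"
  by (simp add: walk_def successively_conv_nth)

lemma adj_commute: "adj E u v = adj E v u"
  by (simp add: adj_def insert_commute)

lemma closed_nbhd_iff: "w \<in> closed_nbhd E y \<longleftrightarrow> w = y \<or> {w, y} \<in> E"
  by (auto simp: closed_nbhd_def nbhd_def)

lemma treeD:
  assumes "tree V E"
  shows "simple_graph V E" "acyclic_graph V E" "connected_graph V E"
  using assms unfolding tree_def by auto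

lemma simple_graph_finite: "simple_graph V E \<Longrightarrow> finite V"
  unfolding simple_graph_def by blast

lemma simple_graph_edgeD: "simple_graph V E \<Longrightarrow> {a, b} \<in> E \<Longrightarrow> a \<noteq> b \<and> a \<in> V \<and> b \<in> V"
  unfolding simple_graph_def by (metis doubleton_eq_iff)

lemma simple_graph_edge_subset: "simple_graph V E \<Longrightarrow> e \<in> E \<Longrightarrow> e \<subseteq> V"
  unfolding simple_graph_def by fastforce

lemma simple_graph_edge_obtain:
  assumes "simple_graph V E" "e \<in> E" "x \<in> e"
  obtains z where "e = {x, z}" "z \<noteq> x" "z \<in> V"
proof -
  obtain u v where "e = {u, v}" "u \<in> V" "v \<in> V" "u \<noteq> v"
    using assms(1,2) unfolding simple_graph_def by meson
  then have "\<exists>z. e = {x, z} \<and> z \<noteq> x \<and> z \<in> V"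
    using assms(3) by (metis insert_commute insert_iff singletonD)
  then show ?thesis using that by blast
qed

lemma finite_nbhd:
  assumes "simple_graph V E"
  shows "finite (nbhd E x)"
proof -
  have "nbhd E x \<subseteq> V" unfolding nbhd_def using simple_graph_edgeD[OF assms] by blast
  then show ?thesis using simple_graph_finite[OF assms] finite_subset by blast
qed

lemma nbhd_eq_if_degree_eq:
  assumes "simple_graph V E" "E' \<subseteq> E" "degree E x = degree E' x"
  shows "nbhd E x = nbhd E' x"
proof -
  have "nbhd E' x \<subseteq> nbhd E x" using assms(2) unfolding nbhd_def by blast
  moreover have "card (nbhd E' x) = card (nbhd E x)" using assms(3) unfolding degree_def by simp
  ultimately show ?thesis using card_subset_eq[OF finite_nbhd[OF assms(1)]] by metis
qed

lemma successively_closed_last: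
  "successively R p \<Longrightarrow> p \<noteq> [] \<Longrightarrow> hd p \<in> A \<Longrightarrow> \<forall>a b. a \<in> A \<longrightarrow> R a b \<longrightarrow> b \<in> A \<Longrightarrow>
   last p \<in> A"
  by (induction p rule: induct_list012) auto

lemma acyclic_graph_mono:
  assumes "acyclic_graph V E" "V' \<subseteq> V" "E' \<subseteq> E"
  shows "acyclic_graph V' E'"
proof -
  have "is_cycle V E c" if "is_cycle V' E' c" for c
  proof -
    have "successively (adj E) c" if "successively (adj E') c"
      by (rule successively_mono[OF that]) (use assms(3) in \<open>auto simp: adj_def\<close>)
    then show ?thesis
      using that assms(2,3) unfolding is_cycle_def walk_iff_successively by (auto simp: adj_def)
  qed
  then show ?thesis using assms(1) unfolding acyclic_graph_def by blast
qed

definition reachable :: "'a set \<Rightarrow> 'a set set \<Rightarrow> 'a \<Rightarrow> 'a \<Rightarrow> bool" where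
  "reachable W E a b \<longleftrightarrow> (\<exists>p. walk W E p \<and> hd p = a \<and> last p = b)"

lemma reachable_refl: "a \<in> W \<Longrightarrow> reachable W E a a"
  unfolding reachable_def by (rule exI[of _ "[a]"]) (simp add: walk_iff_successively)

lemma reachable_sym:
  assumes "reachable W E a b"
  shows "reachable W E b a"
proof -
  obtain p where "walk W E p" "hd p = a" "last p = b" using assms unfolding reachable_def by blast
  then have "walk W E (rev p) \<and> hd (rev p) = b \<and> last (rev p) = a"
    unfolding walk_iff_successively by (simp add: hd_rev last_rev adj_commute)
  then show ?thesis unfolding reachable_def by blast
qed

lemma reachable_step:
  assumes "reachable W E a b" "c \<in> W" "{b, c} \<in> E"
  shows "reachable W E a c"
proof -
  obtain p where "walk W E p" "hd p = a" "last p = b"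
    using assms(1) unfolding reachable_def by blast
  then have "walk W E (p @ [c]) \<and> hd (p @ [c]) = a \<and> last (p @ [c]) = c"
    using assms(2,3) unfolding walk_iff_successively by (auto simp: successively_append_iff adj_def)
  then show ?thesis unfolding reachable_def by blast
qed

lemma reachable_along:
  "successively (adj E) q \<Longrightarrow> set q \<subseteq> W \<Longrightarrow> q \<noteq> [] \<Longrightarrow> reachable W E a (hd q) \<Longrightarrow>
   reachable W E a (last q)"
proof (induction q arbitrary: a rule: induct_list012)
  case (3 x y r)
  then have "reachable W E a y" using reachable_step[of W E a x y] by (auto simp: adj_def)
  then show ?case using 3 by auto
qed auto

lemma reachable_trans: "reachable W E a b \<Longrightarrow> reachable W E b c \<Longrightarrow> reachable W E a c"
  by (metis reachable_def reachable_along walk_iff_successively)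

lemma reachable_neighbour: "reachable W E a x \<Longrightarrow> m \<in> W \<Longrightarrow> {m, x} \<in> E \<Longrightarrow> reachable W E a m"
  using reachable_step[of W E a x m] by (simp add: insert_commute)

lemma walk_distinct_exists:
  "walk W E p \<Longrightarrow> \<exists>q. walk W E q \<and> hd q = hd p \<and> last q = last p \<and> distinct q"
proof (induction "length p" arbitrary: p rule: less_induct)
  case less
  show ?case
  proof (cases "distinct p")
    case False
    then obtain xs ys zs y where p: "p = xs @ [y] @ ys @ [y] @ zs"
      using not_distinct_decomp by blast
    define q where "q = xs @ [y] @ zs"
    have "walk W E q" using less.prems unfolding p q_def walk_iff_successively
      by (auto simp: successively_append_iff successively_Cons split: if_splits)
    moreover have "hd q = hd p" "last q = last p" unfolding p q_def
      by (cases xs; simp) (cases zs; simp)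
    moreover have "length q < length p" unfolding p q_def by simp
    ultimately show ?thesis using less.hyps by metis
  qed (use less.prems in blast)
qed

text \<open>Together with u, such a connection would close a cycle.\<close>
lemma acyclic_no_detour:
  assumes "acyclic_graph V E" "W \<subseteq> V - {u}" "u \<in> V"
    and "{a, u} \<in> E" "{b, u} \<in> E" "a \<noteq> b"
  shows "\<not> reachable W E a b"
proof
  assume "reachable W E a b"
  then obtain q where q: "walk W E q" "hd q = a" "last q = b" "distinct q"
    using walk_distinct_exists unfolding reachable_def by metis
  then have "length q \<noteq> 1" using assms(6) by (cases q) auto
  then have "length q \<ge> 2"
    using q(1) unfolding walk_iff_successively by (cases q) (auto simp: Suc_le_eq)
  then have "is_cycle V E (q @ [u])"
    using q assms(2-5) unfolding is_cycle_def walk_iff_successively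
    by (auto simp: successively_append_iff adj_def insert_commute)
  then show False using assms(1) acyclic_graph_def by blast
qed

lemma acyclic_path_end_neighbour:
  assumes "simple_graph V E" "acyclic_graph V E" "walk V E p" "distinct p" "last p = v"
    and "{v, y} \<in> E" "y \<in> set p"
  shows "\<exists>xs. p = xs @ [y, v]"
proof -
  obtain xs ys where p: "p = xs @ y # ys" using assms(7) by (meson split_list)
  have "y \<noteq> v" using simple_graph_edgeD[OF assms(1,6)] by blast
  then have ys: "ys \<noteq> []" "last ys = v" using p assms(5) by auto
  show ?thesis
  proof (cases "ys = [v]")
    case False
    then have "length ys \<ge> 2" using ys by (cases ys) (auto simp: Suc_le_eq)
    moreover have "set p \<subseteq> V" "successively (adj E) p"
      using assms(3) unfolding walk_iff_successively by auto
    ultimately have "is_cycle V E (y # ys)"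
      unfolding is_cycle_def walk_iff_successively using assms(4,6) p ys
      by (auto simp: successively_append_iff adj_def insert_commute)
    then show ?thesis using assms(2) acyclic_graph_def by blast
  qed (use p in simp)
qed

text \<open>The end of a longest path is a leaf.\<close>
lemma acyclic_has_leaf:
  assumes "simple_graph V E" "acyclic_graph V E" "V \<noteq> {}"
  obtains v where "v \<in> V" "\<And>y z. {v, y} \<in> E \<Longrightarrow> {v, z} \<in> E \<Longrightarrow> y = z"
proof -
  define P where "P = (\<lambda>n. \<exists>p. walk V E p \<and> distinct p \<and> length p = n)"
  obtain x where "x \<in> V" using assms(3) by blast
  then have "P 1" unfolding P_def by (intro exI[of _ "[x]"]) (simp add: walk_iff_successively)
  moreover have "\<forall>n. P n \<longrightarrow> n \<le> card V"
    unfolding P_def walk_iff_successively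
    by (metis card_mono distinct_card simple_graph_finite[OF assms(1)])
  ultimately obtain n where "P n" and longest: "\<And>k. P k \<Longrightarrow> k \<le> n"
    using Nat.ex_has_greatest_nat[of P 1 "card V"] by blast
  then obtain p where p: "walk V E p" "distinct p" "length p = n" unfolding P_def by blast
  have ends: "\<exists>xs. p = xs @ [y, last p]" if "{last p, y} \<in> E" for y
  proof -
    have "y \<in> set p"
    proof (rule ccontr)
      assume "y \<notin> set p"
      then have "P (Suc n)" using p that simple_graph_edgeD[OF assms(1) that]
        unfolding P_def walk_iff_successively
        by (intro exI[of _ "p @ [y]"]) (auto simp: successively_append_iff adj_def)
      then show False using longest by fastforce
    qed
    then show ?thesis using acyclic_path_end_neighbour[OF assms(1,2) p(1,2) refl that] by simp
  qed
  show ?thesis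
  proof
    show "last p \<in> V" using p(1) unfolding walk_iff_successively by auto
    fix y z assume "{last p, y} \<in> E" "{last p, z} \<in> E"
    then obtain xs xs' where "p = xs @ [y, last p]" "p = xs' @ [z, last p]" using ends by blast
    then have "rev p = last p # y # rev xs" "rev p = last p # z # rev xs'" by auto
    then show "y = z" by simp
  qed
qed

section \<open>Skeletons\<close>

text \<open>Skeletons abstract the branch vertices X(F) of a substructure F: every vertex adjacent to
  X(F) is a subdivision vertex and sees exactly two branch vertices.\<close>
definition skeleton :: "'a set set \<Rightarrow> 'a set \<Rightarrow> 'a set \<Rightarrow> 'a set \<Rightarrow> bool" where
  "skeleton E U Y X \<longleftrightarrow> X \<noteq> {} \<and> X \<subseteq> U \<and> X \<subseteq> Y \<and> (\<forall>x\<in>X. \<forall>x'\<in>X. {x, x'} \<notin> E) \<and>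
     (\<forall>m\<in>U. (\<exists>x\<in>X. {m, x} \<in> E) \<longrightarrow> card {x\<in>X. {m, x} \<in> E} = 2)"

lemma skeletonD:
  assumes "skeleton E U Y X"
  shows "X \<noteq> {}" "X \<subseteq> U" "X \<subseteq> Y" "x \<in> X \<Longrightarrow> x' \<in> X \<Longrightarrow> {x, x'} \<notin> E"
    "m \<in> U \<Longrightarrow> x \<in> X \<Longrightarrow> {m, x} \<in> E \<Longrightarrow> card {x\<in>X. {m, x} \<in> E} = 2"
  using assms unfolding skeleton_def by blast+

lemma skeleton_mono_targets: "skeleton E U Y X \<Longrightarrow> Y \<subseteq> Y' \<Longrightarrow> skeleton E U Y' X"
  unfolding skeleton_def by blast

lemma skeleton_enlarge:
  assumes "skeleton E U Y X" "U \<subseteq> U'"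
    and "\<And>m. m \<in> U' - U \<Longrightarrow> \<exists>x\<in>X. {m, x} \<in> E \<Longrightarrow> card {x\<in>X. {m, x} \<in> E} = 2"
  shows "skeleton E U' Y X"
proof -
  have "card {x\<in>X. {m, x} \<in> E} = 2" if "m \<in> U'" "\<exists>x\<in>X. {m, x} \<in> E" for m
    using assms(1,3) that unfolding skeleton_def by (cases "m \<in> U") auto
  then show ?thesis using assms(1,2) unfolding skeleton_def by blast
qed

lemma skeleton_singleton:
  assumes "simple_graph V E" "u \<in> U" "u \<in> Y" "\<forall>m\<in>U. {m, u} \<notin> E"
  shows "skeleton E U Y {u}"
  using assms simple_graph_edgeD[OF assms(1), of u u] unfolding skeleton_def by auto

lemma skeleton_restrict_component:
  assumes X: "skeleton E U Y X" and z: "z \<in> X"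
  shows "skeleton E U Y (X \<inter> {t. reachable U E z t})"
proof -
  have XU: "X \<subseteq> U" using skeletonD(2)[OF X] .
  have same: "{x \<in> X \<inter> {t. reachable U E z t}. {m, x} \<in> E} = {x\<in>X. {m, x} \<in> E}"
    if m: "m \<in> U" and x: "reachable U E z x" "{m, x} \<in> E" for m x
  proof -
    have zm: "reachable U E z m" using reachable_neighbour[OF x(1) m x(2)] .
    have "reachable U E z t" if "t \<in> X" "{m, t} \<in> E" for t
      using reachable_step[OF zm, of t] that XU by blast
    then show ?thesis by blast
  qed
  have "card {x \<in> X \<inter> {t. reachable U E z t}. {m, x} \<in> E} = 2"
    if m: "m \<in> U" and x: "x \<in> X" "reachable U E z x" "{m, x} \<in> E" for m x
    using same[OF m x(2,3)] skeletonD(5)[OF X m x(1,3)] by simp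
  moreover have "X \<inter> {t. reachable U E z t} \<noteq> {}"
    using z reachable_refl[of z U E] XU by blast
  moreover have "\<forall>x\<in>X. \<forall>x'\<in>X. {x, x'} \<notin> E" "X \<subseteq> Y" using X unfolding skeleton_def by blast+
  ultimately show ?thesis using XU unfolding skeleton_def by blast
qed

lemma skeleton_Un:
  assumes Z: "skeleton E U Y Z" and Z': "skeleton E U Y Z'"
    and cross: "\<And>x x'. x \<in> Z \<Longrightarrow> x' \<in> Z' \<Longrightarrow> {x, x'} \<notin> E"
    and separate: "\<And>m x x'. m \<in> U \<Longrightarrow> x \<in> Z \<Longrightarrow> x' \<in> Z' \<Longrightarrow> {m, x} \<in> E \<Longrightarrow> {m, x'} \<notin> E"
  shows "skeleton E U Y (Z \<union> Z')"
proof -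
  have independent: "\<forall>x\<in>Z \<union> Z'. \<forall>x'\<in>Z \<union> Z'. {x, x'} \<notin> E"
  proof (intro ballI)
    fix x x' assume "x \<in> Z \<union> Z'" "x' \<in> Z \<union> Z'"
    then consider "x \<in> Z" "x' \<in> Z" | "x \<in> Z" "x' \<in> Z'" | "x \<in> Z'" "x' \<in> Z" | "x \<in> Z'" "x' \<in> Z'"
      by blast
    then show "{x, x'} \<notin> E"
    proof cases
      case 3
      then show ?thesis using cross[of x' x] by (simp add: insert_commute)
    qed (use cross skeletonD(4)[OF Z] skeletonD(4)[OF Z'] in blast)+
  qed
  have count: "\<forall>m\<in>U. (\<exists>x\<in>Z \<union> Z'. {m, x} \<in> E) \<longrightarrow> card {x \<in> Z \<union> Z'. {m, x} \<in> E} = 2"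
  proof (intro ballI impI)
    fix m assume m: "m \<in> U" "\<exists>x\<in>Z \<union> Z'. {m, x} \<in> E"
    then obtain t where t: "t \<in> Z \<union> Z'" "{m, t} \<in> E" by blast
    show "card {x \<in> Z \<union> Z'. {m, x} \<in> E} = 2"
    proof (cases "t \<in> Z")
      case True
      then have "{x \<in> Z \<union> Z'. {m, x} \<in> E} = {x \<in> Z. {m, x} \<in> E}" using separate m(1) t(2) by blast
      then show ?thesis using skeletonD(5)[OF Z m(1) True t(2)] by simp
    next
      case False
      then have "t \<in> Z'" using t(1) by blast
      then have "{x \<in> Z \<union> Z'. {m, x} \<in> E} = {x \<in> Z'. {m, x} \<in> E}" using separate m(1) t(2) by blast
      then show ?thesis using skeletonD(5)[OF Z' m(1) \<open>t \<in> Z'\<close> t(2)] by simp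
    qed
  qed
  have "Z \<union> Z' \<noteq> {}" "Z \<union> Z' \<subseteq> U" "Z \<union> Z' \<subseteq> Y"
    using skeletonD(1-3)[OF Z] skeletonD(2,3)[OF Z'] by auto
  then show ?thesis using independent count unfolding skeleton_def by blast
qed

lemma skeleton_Un_components:
  assumes Z: "skeleton E U Y Z" "Z \<subseteq> {t. reachable U E a t}"
    and Z': "skeleton E U Y Z'" "Z' \<subseteq> {t. reachable U E b t}"
    and disjoint: "{t. reachable U E a t} \<inter> {t. reachable U E b t} = {}"
  shows "skeleton E U Y (Z \<union> Z')"
proof (rule skeleton_Un[OF Z(1) Z'(1)])
  fix x x' assume x: "x \<in> Z" "x' \<in> Z'"
  show "{x, x'} \<notin> E"
  proof
    assume "{x, x'} \<in> E"
    moreover have "x' \<in> U" "reachable U E a x" using skeletonD(2)[OF Z'(1)] x Z(2) by blast+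
    ultimately have "reachable U E a x'"
      using reachable_neighbour[of U E a x x'] by (simp add: insert_commute)
    then show False using x(2) Z'(2) disjoint by blast
  qed
next
  fix m x x' assume m: "m \<in> U" and x: "x \<in> Z" "x' \<in> Z'" and "{m, x} \<in> E"
  then have "reachable U E a m" using reachable_neighbour[of U E a x m] Z(2) by blast
  moreover have "reachable U E b m" if "{m, x'} \<in> E"
    using reachable_neighbour[of U E b x' m] that m x(2) Z'(2) by blast
  ultimately show "{m, x'} \<notin> E" using disjoint by blast
qed

section \<open>Dominator's strategy\<close>

locale staller_move =
  fixes V E U Y u
  assumes simple: "simple_graph V E" and acyclic: "acyclic_graph V E" and UV: "U \<subseteq> V"
    and u: "u \<in> U" and no_skeleton: "\<not> (\<exists>X. skeleton E U Y X)"
begin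

abbreviation "component a \<equiv> {t. reachable (U - {u}) E a t}"

definition threat :: "'a \<Rightarrow> bool" where
  "threat a \<longleftrightarrow> a \<in> U - {u} \<and> {a, u} \<in> E \<and>
     (\<exists>Z. skeleton E (U - {u}) (Y - {u}) Z \<and> a \<in> Z \<and> Z \<subseteq> component a)"

lemma neighbour_unique_in_component:
  assumes "{a, u} \<in> E" "{t, u} \<in> E" "reachable (U - {u}) E a t"
  shows "t = a"
  using acyclic_no_detour[OF acyclic, of "U - {u}" u a t] assms UV u by blast

lemma skeleton_has_threat:
  assumes Z: "skeleton E (U - {u}) (Y - {u}) Z"
  shows "\<exists>b\<in>Z. threat b"
proof -
  obtain z where z: "z \<in> Z" using skeletonD(1)[OF Z] by blast
  define Z1 where "Z1 = Z \<inter> component z"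
  have Z1: "skeleton E (U - {u}) (Y - {u}) Z1"
    unfolding Z1_def by (rule skeleton_restrict_component[OF Z z])
  show ?thesis
  proof (cases "\<exists>b\<in>Z1. {b, u} \<in> E")
    case True
    then obtain b where b: "b \<in> Z1" "{b, u} \<in> E" by blast
    then have "reachable (U - {u}) E z b" unfolding Z1_def by simp
    then have "reachable (U - {u}) E b z" by (rule reachable_sym)
    then have "Z1 \<subseteq> component b" unfolding Z1_def using reachable_trans[of "U - {u}" E b z] by blast
    moreover have "b \<in> U - {u}" using b(1) skeletonD(2)[OF Z1] by blast
    ultimately have "threat b" unfolding threat_def using Z1 b by blast
    then show ?thesis using b Z1_def by blast
  next
    case False
    have "skeleton E U (Y - {u}) Z1"
      by (rule skeleton_enlarge[OF Z1]) (use False in \<open>auto simp: insert_commute\<close>)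
    then have "skeleton E U Y Z1" by (rule skeleton_mono_targets) blast
    then show ?thesis using no_skeleton by blast
  qed
qed

text \<open>Two threats would yield, together with u, a skeleton of U.\<close>
lemma threat_unique:
  assumes a: "threat a" and b: "threat b"
  shows "a = b"
proof (rule ccontr)
  assume ab: "a \<noteq> b"
  obtain Z where Z: "skeleton E (U - {u}) (Y - {u}) Z" "a \<in> Z" "Z \<subseteq> component a"
    using a unfolding threat_def by blast
  obtain Z' where Z': "skeleton E (U - {u}) (Y - {u}) Z'" "b \<in> Z'" "Z' \<subseteq> component b"
    using b unfolding threat_def by blast
  have au: "{a, u} \<in> E" and bu: "{b, u} \<in> E" using a b unfolding threat_def by auto
  have "component a \<inter> component b = {}"
  proof (rule ccontr)
    assume "component a \<inter> component b \<noteq> {}"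
    then obtain t where "reachable (U - {u}) E a t" "reachable (U - {u}) E b t" by blast
    then have "reachable (U - {u}) E a b" using reachable_trans reachable_sym by metis
    then show False using neighbour_unique_in_component[OF au bu] ab by blast
  qed
  then have ZZ': "skeleton E (U - {u}) (Y - {u}) (Z \<union> Z')"
    using skeleton_Un_components[OF Z(1,3) Z'(1,3)] by blast
  have "x = a" if "x \<in> Z" "{u, x} \<in> E" for x
    using neighbour_unique_in_component[OF au, of x] Z(3) that
      by (simp add: insert_commute subset_iff)
  moreover have "x = b" if "x \<in> Z'" "{u, x} \<in> E" for x
    using neighbour_unique_in_component[OF bu, of x] Z'(3) that
      by (simp add: insert_commute subset_iff)
  moreover have "{u, a} \<in> E" "{u, b} \<in> E" using au bu by (simp_all add: insert_commute)
  ultimately have u_sees: "{x \<in> Z \<union> Z'. {u, x} \<in> E} = {a, b}" using Z(2) Z'(2) by blast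
  have "skeleton E U (Y - {u}) (Z \<union> Z')"
    by (rule skeleton_enlarge[OF ZZ']) (use u_sees ab in auto)
  then have "skeleton E U Y (Z \<union> Z')" by (rule skeleton_mono_targets) blast
  then show False using no_skeleton by blast
qed

text \<open>Otherwise {u} would be a skeleton.\<close>
lemma target_has_free_neighbour:
  assumes "u \<in> Y"
  obtains w where "w \<in> U - {u}" "{u, w} \<in> E"
proof (rule ccontr)
  assume "\<not> thesis"
  then have "\<forall>m\<in>U. {m, u} \<notin> E"
    using that simple_graph_edgeD[OF simple, of u u] by (metis Diff_iff insert_commute singletonD)
  then have "skeleton E U Y {u}" by (rule skeleton_singleton[OF simple u assms])
  then show False using no_skeleton by blast
qed

text \<open>Dominator answers the threat if there is one, otherwise a neighbour of u if u is a target.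
  Any skeleton left afterwards would, back in U - {u}, contain a second threat.\<close>
lemma dominator_reply:
  assumes "U \<noteq> {u}"
  shows "\<exists>w\<in>U - {u}. (u \<in> Y \<longrightarrow> {u, w} \<in> E) \<and>
     \<not> (\<exists>X. skeleton E (U - {u, w}) (Y - {u} - {y. y = w \<or> {y, w} \<in> E}) X)"
proof -
  obtain w where w: "w \<in> U - {u}" "u \<in> Y \<longrightarrow> {u, w} \<in> E" "(\<exists>a. threat a) \<longrightarrow> threat w"
  proof (cases "\<exists>a. threat a")
    case True
    then obtain a where "threat a" by blast
    then show ?thesis using that threat_def by (metis insert_commute)
  next
    case False
    obtain a where "a \<in> U - {u}" "u \<in> Y \<longrightarrow> {u, a} \<in> E"
      using target_has_free_neighbour assms u by blast
    then show ?thesis using that False by blast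
  qed
  show ?thesis
  proof (intro bexI[OF _ w(1)] conjI w(2) notI)
    assume "\<exists>X. skeleton E (U - {u, w}) (Y - {u} - {y. y = w \<or> {y, w} \<in> E}) X"
    then obtain Z where Z: "skeleton E (U - {u, w}) (Y - {u} - {y. y = w \<or> {y, w} \<in> E}) Z" by blast
    have "skeleton E (U - {u}) (Y - {u} - {y. y = w \<or> {y, w} \<in> E}) Z"
      by (rule skeleton_enlarge[OF Z]) (use skeletonD(3)[OF Z] in \<open>auto simp: insert_commute\<close>)
    then have "skeleton E (U - {u}) (Y - {u}) Z" using skeleton_mono_targets by blast
    then obtain b where "b \<in> Z" "threat b" using skeleton_has_threat by blast
    moreover have "b \<noteq> w" using \<open>b \<in> Z\<close> skeletonD(2)[OF Z] by blast
    ultimately show False using threat_unique w(3) by blast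
  qed
qed

end

lemma sw_if_staller_goal: "staller_goal V E D S \<Longrightarrow> sw V E D t n S Dm"
proof (induction n arbitrary: t S Dm)
  case 0
  then show ?case by (cases t) auto
next
  case (Suc n)
  have "staller_goal V E D (insert u S)" for u
    using Suc.prems unfolding staller_goal_def by blast
  then show ?case using Suc by (cases t) auto
qed

lemma sw_Suc_if_move_wins:
  "u \<in> V - S - Dm \<Longrightarrow> staller_goal V E D (insert u S) \<Longrightarrow> sw V E D True (Suc n) S Dm"
  using sw_if_staller_goal[of V E D "insert u S" False n Dm] by auto

lemma fuel_Suc_if_free: "finite V \<Longrightarrow> a \<in> V - A - B \<Longrightarrow> card (V - A - B) \<le> n \<Longrightarrow> \<exists>k. n = Suc k"
  using card_gt_0_iff[of "V - A - B"] by (cases n) auto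

lemma card_free_after_claim:
  assumes "finite V" "a \<in> V - A - B" "card (V - A - B) \<le> Suc k"
  shows "card (V - insert a A - B) \<le> k" "card (V - A - insert a B) \<le> k"
proof -
  have "V - insert a A - B = V - A - B - {a}" "V - A - insert a B = V - A - B - {a}" by blast+
  then show "card (V - insert a A - B) \<le> k" "card (V - A - insert a B) \<le> k"
    using assms by (simp_all add: card_Diff_singleton)
qed

definition open_targets :: "'a set \<Rightarrow> 'a set set \<Rightarrow> 'a set \<Rightarrow> 'a set \<Rightarrow> 'a set \<Rightarrow> 'a set" where
  "open_targets V E D S Dm = {y \<in> V - D. y \<notin> S \<and> (\<forall>d\<in>Dm. d \<notin> closed_nbhd E y)}"

definition dominator_safe :: "'a set \<Rightarrow> 'a set set \<Rightarrow> 'a set \<Rightarrow> 'a set \<Rightarrow> 'a set \<Rightarrow> bool" where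
  "dominator_safe V E D S Dm \<longleftrightarrow> S \<inter> Dm = {} \<and>
     (\<forall>y\<in>V - D. y \<in> S \<longrightarrow> (\<exists>d\<in>Dm. d \<in> closed_nbhd E y)) \<and>
     \<not> (\<exists>X. skeleton E (V - S - Dm) (open_targets V E D S Dm) X)"

lemma dominator_safe_no_goal:
  assumes "dominator_safe V E D S Dm"
  shows "\<not> staller_goal V E D S"
proof
  assume "staller_goal V E D S"
  then obtain y where "y \<in> V - D" "closed_nbhd E y \<subseteq> S" unfolding staller_goal_def by blast
  moreover have "y \<in> closed_nbhd E y" by (simp add: closed_nbhd_def)
  ultimately show False using assms unfolding dominator_safe_def by blast
qed

lemma no_goal_after_move:
  assumes safe: "S \<inter> Dm = {}" "\<forall>y\<in>V - D. y \<in> S \<longrightarrow> (\<exists>d\<in>Dm. d \<in> closed_nbhd E y)"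
    and "u \<notin> Dm"
    and nbr: "u \<in> open_targets V E D S Dm \<Longrightarrow> \<exists>w. w \<notin> S \<and> w \<noteq> u \<and> {u, w} \<in> E"
  shows "\<not> staller_goal V E D (insert u S)"
proof
  assume "staller_goal V E D (insert u S)"
  then obtain y where y: "y \<in> V - D" "closed_nbhd E y \<subseteq> insert u S"
    unfolding staller_goal_def by blast
  show False
  proof (cases "\<exists>d\<in>Dm. d \<in> closed_nbhd E y")
    case True
    then show False using y(2) safe(1) \<open>u \<notin> Dm\<close> by blast
  next
    case False
    then have "y \<notin> S" using safe(2) y(1) by blast
    moreover have "y \<in> insert u S" using y(2) by (auto simp: closed_nbhd_def)
    ultimately have "y = u" by blast
    then have "u \<in> open_targets V E D S Dm"
      unfolding open_targets_def using y(1) False \<open>y \<notin> S\<close> by blast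
    then obtain w where "w \<notin> S" "w \<noteq> u" "{u, w} \<in> E" using nbr by blast
    then show False using y(2) \<open>y = u\<close> closed_nbhd_iff[of w E u] by (auto simp: insert_commute)
  qed
qed

lemma dominator_safe_step:
  assumes "simple_graph V E" "acyclic_graph V E" and safe: "dominator_safe V E D S Dm"
    and u: "u \<in> V - S - Dm" and not_last: "V - S - Dm \<noteq> {u}"
  obtains w where "w \<in> V - insert u S - Dm" "dominator_safe V E D (insert u S) (insert w Dm)"
proof -
  let ?Y = "open_targets V E D S Dm"
  interpret staller_move V E "V - S - Dm" ?Y u
    using assms unfolding dominator_safe_def by unfold_locales auto
  obtain w where w: "w \<in> V - S - Dm - {u}" "u \<in> ?Y \<longrightarrow> {u, w} \<in> E"
    and no_skeleton':
      "\<not> (\<exists>X. skeleton E (V - S - Dm - {u, w}) (?Y - {u} - {y. y = w \<or> {y, w} \<in> E}) X)"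
    using dominator_reply[OF not_last] by blast
  have disjoint: "insert u S \<inter> insert w Dm = {}"
    using safe u w(1) unfolding dominator_safe_def by blast
  have dominated: "\<exists>d\<in>insert w Dm. d \<in> closed_nbhd E y" if y: "y \<in> V - D" "y \<in> insert u S" for y
  proof (cases "y \<in> S \<or> (\<exists>d\<in>Dm. d \<in> closed_nbhd E y)")
    case True
    then show ?thesis using safe y(1) unfolding dominator_safe_def by blast
  next
    case False
    then have "y = u" "u \<in> ?Y" using y u unfolding open_targets_def by auto
    then show ?thesis using w(2) closed_nbhd_iff[of w E u] by (auto simp: insert_commute)
  qed
  have "V - insert u S - insert w Dm = V - S - Dm - {u, w}" by blast
  moreover have "open_targets V E D (insert u S) (insert w Dm) \<subseteq> ?Y - {u} - {y. y = w \<or> {y, w} \<in> E}"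
    unfolding open_targets_def by (auto simp: closed_nbhd_iff insert_commute)
  ultimately have "\<not> (\<exists>X. skeleton E (V - insert u S - insert w Dm)
      (open_targets V E D (insert u S) (insert w Dm)) X)"
    using no_skeleton' skeleton_mono_targets by (metis (no_types, lifting))
  then have "dominator_safe V E D (insert u S) (insert w Dm)"
    unfolding dominator_safe_def using disjoint dominated by blast
  then show ?thesis using that w(1) by blast
qed

lemma staller_move_no_goal:
  assumes "simple_graph V E" "acyclic_graph V E" "dominator_safe V E D S Dm" "u \<in> V - S - Dm"
  shows "\<not> staller_goal V E D (insert u S)"
proof (cases "V - S - Dm = {u}")
  case True
  interpret staller_move V E "V - S - Dm" "open_targets V E D S Dm" u
    using assms unfolding dominator_safe_def by unfold_locales auto
  have "u \<notin> open_targets V E D S Dm" using target_has_free_neighbour True by blast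
  moreover have "S \<inter> Dm = {}" "\<forall>y\<in>V - D. y \<in> S \<longrightarrow> (\<exists>d\<in>Dm. d \<in> closed_nbhd E y)"
    using assms(3) unfolding dominator_safe_def by blast+
  ultimately show ?thesis using no_goal_after_move[of S Dm V D E u] assms(4) by blast
next
  case False
  then obtain w where "dominator_safe V E D (insert u S) (insert w Dm)"
    using dominator_safe_step[OF assms] by metis
  then show ?thesis by (rule dominator_safe_no_goal)
qed

lemma dominator_safe_not_sw:
  assumes "simple_graph V E" "acyclic_graph V E"
  shows "dominator_safe V E D S Dm \<Longrightarrow> \<not> sw V E D True n S Dm"
proof (induction n arbitrary: S Dm rule: less_induct)
  case (less N)
  have "\<not> sw V E D False n (insert u S) Dm" if N: "N = Suc n" and u: "u \<in> V - S - Dm" for n u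
  proof (cases "n = 0 \<or> V - S - Dm = {u}")
    case True
    then have "n = 0 \<or> V - insert u S - Dm = {}" by blast
    then show ?thesis
      using staller_move_no_goal[OF assms less.prems u] by (cases n) auto
  next
    case False
    then obtain k where k: "n = Suc k" by (cases n) auto
    obtain w where w: "w \<in> V - insert u S - Dm" "dominator_safe V E D (insert u S) (insert w Dm)"
      using dominator_safe_step[OF assms less.prems u] False by blast
    have "\<not> sw V E D True k (insert u S) (insert w Dm)"
      using less.IH[OF _ w(2)] k N by simp
    then show ?thesis using k w(1) by auto
  qed
  then show ?case
    using dominator_safe_no_goal[OF less.prems] by (cases N) auto
qed

lemma dominator_wins_if_no_skeleton:
  assumes "simple_graph V E" "acyclic_graph V E" "\<not> (\<exists>X. skeleton E V (V - D) X)"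
  shows "\<not> staller_wins V E D"
proof -
  have "open_targets V E D {} {} = V - D" unfolding open_targets_def by auto
  then have "dominator_safe V E D {} {}" using assms(3) unfolding dominator_safe_def by simp
  then show ?thesis unfolding staller_wins_def by (rule dominator_safe_not_sw[OF assms(1,2)])
qed

section \<open>Staller's strategy\<close>

text \<open>A subdivided forest on the branch vertices X, with subdivision vertex m e for the edge e,
  embedded in (V, E) so that the branch vertices keep their neighbourhoods and lie outside D.\<close>
locale embedded_subdivision =
  fixes V E D X F m
  assumes simple: "simple_graph V E"
    and simple_F: "simple_graph X F" and acyclic_F: "acyclic_graph X F"
    and XV: "X \<subseteq> V" and mV: "m ` F \<subseteq> V" and mX: "m ` F \<inter> X = {}" and inj: "inj_on m F"
    and closed_nbhd_branch: "\<And>x. x \<in> X \<Longrightarrow> closed_nbhd E x = insert x (m ` {e\<in>F. x \<in> e})"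
    and XD: "X \<inter> D = {}"
begin

lemma staller_goal_at_branch_vertex:
  assumes "x \<in> X" "x \<in> S" "\<And>e. e \<in> F \<Longrightarrow> x \<in> e \<Longrightarrow> m e \<in> S"
  shows "staller_goal V E D S"
  unfolding staller_goal_def
  using assms XV XD closed_nbhd_branch[OF assms(1)] by (intro bexI[of _ x]) auto

definition staller_position :: "'a set \<Rightarrow> 'a set \<Rightarrow> 'a set \<Rightarrow> bool" where
  "staller_position X' S Dm \<longleftrightarrow> X' \<subseteq> X \<and> X' \<noteq> {} \<and> (\<forall>x\<in>X'. x \<notin> S \<and> x \<notin> Dm) \<and>
     (\<forall>e\<in>F. e \<subseteq> X' \<longrightarrow> m e \<notin> S \<and> m e \<notin> Dm) \<and>
     (\<forall>x\<in>X'. \<forall>e\<in>F. x \<in> e \<longrightarrow> \<not> e \<subseteq> X' \<longrightarrow> m e \<in> S)"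

lemma staller_position_leaf:
  assumes "staller_position X' S Dm"
  obtains x where "x \<in> X'"
    "\<And>e e'. e \<in> F \<Longrightarrow> e' \<in> F \<Longrightarrow> x \<in> e \<Longrightarrow> x \<in> e' \<Longrightarrow> e \<subseteq> X' \<Longrightarrow> e' \<subseteq> X' \<Longrightarrow> e = e'"
proof -
  define F' where "F' = {e\<in>F. e \<subseteq> X'}"
  have X': "X' \<subseteq> X" "X' \<noteq> {}" using assms unfolding staller_position_def by auto
  have "simple_graph X' F'"
    unfolding simple_graph_def
  proof (intro conjI ballI)
    show "finite X'" using finite_subset[OF X'(1) simple_graph_finite[OF simple_F]] .
    fix e assume e: "e \<in> F'"
    then obtain u v where "e = {u, v}" "u \<noteq> v"
      using simple_F unfolding simple_graph_def F'_def by blast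
    then show "\<exists>u v. e = {u, v} \<and> u \<noteq> v \<and> u \<in> X' \<and> v \<in> X'" using e unfolding F'_def by auto
  qed
  moreover have "acyclic_graph X' F'"
    by (rule acyclic_graph_mono[OF acyclic_F X'(1)]) (auto simp: F'_def)
  ultimately obtain x where x: "x \<in> X'" and leaf: "\<And>y z. {x, y} \<in> F' \<Longrightarrow> {x, z} \<in> F' \<Longrightarrow> y = z"
    using acyclic_has_leaf X'(2) by metis
  show ?thesis
  proof (rule that[OF x])
    fix e e' assume "e \<in> F" "e' \<in> F" "x \<in> e" "x \<in> e'" "e \<subseteq> X'" "e' \<subseteq> X'"
    moreover obtain y z where "e = {x, y}" "e' = {x, z}"
      using simple_graph_edge_obtain[OF simple_F \<open>e \<in> F\<close> \<open>x \<in> e\<close>]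
        simple_graph_edge_obtain[OF simple_F \<open>e' \<in> F\<close> \<open>x \<in> e'\<close>] by metis
    ultimately show "e = e'" using leaf unfolding F'_def by blast
  qed
qed

text \<open>Once Staller has claimed the subdivision vertex of the last edge at the leaf x of X',
  Dominator must take x, and Staller holds the subtree on X' - {x}.\<close>
lemma staller_position_remove_leaf:
  assumes pos: "staller_position X' S Dm" and x: "x \<in> X'"
    and e0: "e0 \<in> F" "x \<in> e0" "e0 \<subseteq> X'"
    and leaf: "\<And>e. e \<in> F \<Longrightarrow> x \<in> e \<Longrightarrow> e \<subseteq> X' \<Longrightarrow> e = e0"
  shows "staller_position (X' - {x}) (insert (m e0) S) (insert x Dm)"
proof -
  have X': "X' \<subseteq> X" "\<forall>x\<in>X'. x \<notin> S \<and> x \<notin> Dm" "\<forall>e\<in>F. e \<subseteq> X' \<longrightarrow> m e \<notin> S \<and> m e \<notin> Dm"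
    "\<forall>x\<in>X'. \<forall>e\<in>F. x \<in> e \<longrightarrow> \<not> e \<subseteq> X' \<longrightarrow> m e \<in> S"
    using pos unfolding staller_position_def by auto
  obtain y where "e0 = {x, y}" "y \<noteq> x" using simple_graph_edge_obtain[OF simple_F e0(1,2)] by blast
  then have nonempty: "X' - {x} \<noteq> {}" using e0(3) by blast
  have "m e0 \<notin> X" using mX e0(1) by blast
  then have free: "\<forall>x'\<in>X' - {x}. x' \<notin> insert (m e0) S \<and> x' \<notin> insert x Dm" using X'(1,2) by blast
  have "m e \<notin> insert (m e0) S \<and> m e \<notin> insert x Dm" if "e \<in> F" "e \<subseteq> X' - {x}" for e
  proof -
    have "e \<noteq> e0" using that(2) e0(2) by blast
    then have "m e \<noteq> m e0" using inj that(1) e0(1) by (meson inj_onD)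
    moreover have "m e \<noteq> x" using mX that(1) x X'(1) by blast
    ultimately show ?thesis using X'(3) that by blast
  qed
  moreover have "m e \<in> insert (m e0) S"
    if "x' \<in> X' - {x}" "e \<in> F" "x' \<in> e" "\<not> e \<subseteq> X' - {x}" for x' e
  proof (cases "e \<subseteq> X'")
    case True
    then have "x \<in> e" using that(4) by blast
    then have "e = e0" using leaf that(2) True by blast
    then show ?thesis by blast
  next
    case False
    then show ?thesis using X'(4) that by blast
  qed
  moreover have "X' - {x} \<subseteq> X" using X'(1) by blast
  ultimately show ?thesis using nonempty free unfolding staller_position_def by (intro conjI) blast+
qed

lemma staller_position_free:
  assumes "staller_position X' S Dm"
  shows "X' \<subseteq> X" "x \<in> X' \<Longrightarrow> x \<in> V - S - Dm"
    "e \<in> F \<Longrightarrow> e \<subseteq> X' \<Longrightarrow> m e \<in> V - S - Dm - X"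
  using assms XV mV mX unfolding staller_position_def by auto

lemma staller_goal_at_leaf:
  assumes pos: "staller_position X' S Dm" and x: "x \<in> X'" and ST: "S \<subseteq> T"
    and claimed: "\<And>e. e \<in> F \<Longrightarrow> x \<in> e \<Longrightarrow> e \<subseteq> X' \<Longrightarrow> m e \<in> T"
  shows "staller_goal V E D (insert x T)"
proof (rule staller_goal_at_branch_vertex)
  have X': "X' \<subseteq> X" "\<forall>x\<in>X'. \<forall>e\<in>F. x \<in> e \<longrightarrow> \<not> e \<subseteq> X' \<longrightarrow> m e \<in> S"
    using pos unfolding staller_position_def by auto
  then show "x \<in> X" using x by blast
  show "m e \<in> insert x T" if "e \<in> F" "x \<in> e" for e
    using X'(2) x ST claimed[OF that] that by blast
qed simp

text \<open>If Dominator does not answer Staller's claim of m e0 by taking the leaf x, Staller takes x.\<close>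
lemma staller_wins_at_unanswered_leaf:
  assumes pos: "staller_position X' S Dm" and x: "x \<in> X'" and e0: "e0 \<in> F" "x \<in> e0" "e0 \<subseteq> X'"
    and leaf: "\<And>e. e \<in> F \<Longrightarrow> x \<in> e \<Longrightarrow> e \<subseteq> X' \<Longrightarrow> e = e0"
    and x_free: "x \<in> V - insert (m e0) S - Dm'"
    and fuel: "card (V - insert (m e0) S - Dm') \<le> j"
  shows "sw V E D True j (insert (m e0) S) Dm'"
proof -
  have "staller_goal V E D (insert x (insert (m e0) S))"
    using staller_goal_at_leaf[OF pos x, of "insert (m e0) S"] leaf by blast
  moreover obtain i where "j = Suc i"
    using fuel_Suc_if_free[OF simple_graph_finite[OF simple] x_free fuel] by blast
  ultimately show ?thesis using sw_Suc_if_move_wins[OF x_free] by blast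
qed

lemma staller_position_wins:
  "staller_position X' S Dm \<Longrightarrow> card (V - S - Dm) \<le> n \<Longrightarrow> sw V E D True n S Dm"
proof (induction n arbitrary: X' S Dm rule: less_induct)
  case (less n)
  note pos = less.prems(1)
  have fin: "finite V" using simple_graph_finite[OF simple] .
  obtain x where x: "x \<in> X'"
    and leaf: "\<And>e e'. e \<in> F \<Longrightarrow> e' \<in> F \<Longrightarrow> x \<in> e \<Longrightarrow> x \<in> e' \<Longrightarrow> e \<subseteq> X' \<Longrightarrow> e' \<subseteq> X' \<Longrightarrow> e = e'"
    using staller_position_leaf[OF pos] by blast
  have x_free: "x \<in> V - S - Dm" using staller_position_free(2)[OF pos x] .
  then obtain k where k: "n = Suc k" using fuel_Suc_if_free[OF fin] less.prems(2) by blast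
  show ?case
  proof (cases "\<exists>e0\<in>F. x \<in> e0 \<and> e0 \<subseteq> X'")
    case False
    then have "staller_goal V E D (insert x S)"
      by (intro staller_goal_at_leaf[OF pos x subset_refl]) blast
    then show ?thesis using sw_Suc_if_move_wins[OF x_free] k by blast
  next
    case True
    then obtain e0 where e0: "e0 \<in> F" "x \<in> e0" "e0 \<subseteq> X'" by blast
    let ?S = "insert (m e0) S"
    have me0_free: "m e0 \<in> V - S - Dm" "m e0 \<noteq> x"
      using staller_position_free(1)[OF pos] staller_position_free(3)[OF pos e0(1,3)] x by auto
    then have x_free': "x \<in> V - ?S - Dm" using x_free by blast
    have "card (V - ?S - Dm) \<le> k"
      using card_free_after_claim(1)[OF fin me0_free(1), of k] less.prems(2) k by simp
    then obtain j where j: "k = Suc j" "card (V - ?S - Dm) \<le> Suc j"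
      using fuel_Suc_if_free[OF fin x_free'] by blast
    have "sw V E D True j ?S (insert u Dm)" if u: "u \<in> V - ?S - Dm" for u
    proof (cases "u = x")
      case True
      have "staller_position (X' - {x}) ?S (insert x Dm)"
        by (rule staller_position_remove_leaf[OF pos x e0]) (use leaf e0 in blast)
      moreover have "card (V - ?S - insert x Dm) \<le> j"
        using card_free_after_claim(2)[OF fin u j(2)] True by simp
      moreover have "j < n" using k j(1) by simp
      ultimately show ?thesis using less.IH True by blast
    next
      case False
      then have "x \<in> V - ?S - insert u Dm" using x_free' by blast
      then show ?thesis
        using staller_wins_at_unanswered_leaf[OF pos x e0 leaf[OF _ e0(1) _ e0(2) _ e0(3)]]
          card_free_after_claim(2)[OF fin u j(2)] by blast
    qed
    then have "sw V E D False k ?S Dm" using j x_free' by auto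
    then show ?thesis using k me0_free(1) by auto
  qed
qed

lemma staller_wins_if_nonempty: "X \<noteq> {} \<Longrightarrow> staller_wins V E D"
  unfolding staller_wins_def
  by (rule staller_position_wins[of X]) (use simple_graph_edge_subset[OF simple_F] in
      \<open>auto simp: staller_position_def\<close>)

end

section \<open>Substructures\<close>

lemma subdivided_nbhd:
  assumes "bij_betw m F (VF - X)" "EF = (\<Union>e\<in>F. (\<lambda>a. {a, m e}) ` e)" "x \<in> X"
  shows "nbhd EF x = m ` {e\<in>F. x \<in> e}"
proof -
  have mX: "m e \<notin> X" if "e \<in> F" for e using bij_betw_imp_surj_on[OF assms(1)] that by blast
  have "u \<in> nbhd EF x \<longleftrightarrow> (\<exists>e\<in>F. x \<in> e \<and> u = m e)" for u
  proof
    assume "u \<in> nbhd EF x"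
    then obtain e a where ea: "e \<in> F" "a \<in> e" "{u, x} = {a, m e}"
      unfolding nbhd_def assms(2) by blast
    then have "(u = a \<and> x = m e) \<or> (u = m e \<and> x = a)" by (simp add: doubleton_eq_iff)
    then show "\<exists>e\<in>F. x \<in> e \<and> u = m e" using mX[OF ea(1)] assms(3) ea by blast
  next
    assume "\<exists>e\<in>F. x \<in> e \<and> u = m e"
    then obtain e where e: "e \<in> F" "x \<in> e" "u = m e" by blast
    then have "{x, m e} \<in> EF" unfolding assms(2) by blast
    then show "u \<in> nbhd EF x" unfolding nbhd_def using e by (simp add: insert_commute)
  qed
  then show ?thesis by blast
qed

lemma substructureE:
  assumes "substructure V E VF EF X"
  obtains F m where "tree X F" "bij_betw m F (VF - X)" "EF = (\<Union>e\<in>F. (\<lambda>a. {a, m e}) ` e)"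
    "X \<subseteq> VF" "VF \<subseteq> V" "EF \<subseteq> E" "\<forall>v\<in>X. degree E v = degree EF v"
proof -
  have "subdivided_tree VF EF X" "VF \<subseteq> V" "EF \<subseteq> E" "\<forall>v\<in>X. degree E v = degree EF v"
    using assms unfolding substructure_def by simp_all
  moreover have "X \<subseteq> VF" using \<open>subdivided_tree VF EF X\<close> unfolding subdivided_tree_def by simp
  moreover obtain F m where "tree X F" "bij_betw m F (VF - X)" "EF = (\<Union>e\<in>F. (\<lambda>a. {a, m e}) ` e)"
    using \<open>subdivided_tree VF EF X\<close> unfolding subdivided_tree_def by (elim conjE exE)
  ultimately show ?thesis using that by blast
qed

lemma substructure_nbhd:
  assumes "simple_graph V E" "substructure V E VF EF X" "bij_betw m F (VF - X)"
    "EF = (\<Union>e\<in>F. (\<lambda>a. {a, m e}) ` e)" "x \<in> X"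
  shows "nbhd E x = m ` {e\<in>F. x \<in> e}"
proof -
  have "EF \<subseteq> E" "degree E x = degree EF x"
    using assms(2,5) unfolding substructure_def by auto
  then have "nbhd E x = nbhd EF x" using nbhd_eq_if_degree_eq[OF assms(1)] by blast
  also have "\<dots> = m ` {e\<in>F. x \<in> e}" by (rule subdivided_nbhd[OF assms(3-5)])
  finally show ?thesis .
qed

lemma staller_wins_if_substructure:
  assumes T: "tree V E" and S: "substructure V E VF EF X" and XD: "X \<inter> D = {}"
  shows "staller_wins V E D"
proof -
  obtain F m where F: "tree X F" "bij_betw m F (VF - X)" "EF = (\<Union>e\<in>F. (\<lambda>a. {a, m e}) ` e)"
    "X \<subseteq> VF" "VF \<subseteq> V" "EF \<subseteq> E" "\<forall>v\<in>X. degree E v = degree EF v"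
    by (rule substructureE[OF S])
  have simple: "simple_graph V E" using treeD[OF T] by blast
  have im: "m ` F = VF - X" using bij_betw_imp_surj_on[OF F(2)] .
  interpret embedded_subdivision V E D X F m
  proof
    show "simple_graph X F" "acyclic_graph X F" using treeD[OF F(1)] by blast+
    show "X \<subseteq> V" using F(4,5) by (rule subset_trans)
    show "m ` F \<subseteq> V" "m ` F \<inter> X = {}" using im F(5) by blast+
    show "inj_on m F" using F(2) bij_betw_imp_inj_on by blast
    show "closed_nbhd E x = insert x (m ` {e\<in>F. x \<in> e})" if "x \<in> X" for x
      using substructure_nbhd[OF simple S F(2,3) that] unfolding closed_nbhd_def by simp
    show "simple_graph V E" by (rule simple)
    show "X \<inter> D = {}" by (rule XD)
  qed
  have "X \<noteq> {}" using treeD(3)[OF F(1)] unfolding connected_graph_def by blast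
  then show ?thesis by (rule staller_wins_if_nonempty)
qed

text \<open>A subdivision vertex m e sees exactly the two ends of e among the branch vertices, so a
  skeleton of branch vertices containing one end of e contains the other.\<close>
lemma skeleton_closed_along_subdivided_edge:
  assumes simple: "simple_graph V E" and simple_F: "simple_graph X F" and inj: "inj_on m F"
    and nbhd: "\<And>x. x \<in> X \<Longrightarrow> nbhd E x = m ` {e\<in>F. x \<in> e}"
    and Z: "skeleton E V Y Z" "Z \<subseteq> X" and z: "z \<in> Z" and e: "{z, x'} \<in> F"
  shows "x' \<in> Z"
proof -
  define e where "e = {z, x'}"
  have "m e \<in> nbhd E z" using nbhd[of z] z Z(2) e e_def by blast
  then have me: "{m e, z} \<in> E" unfolding nbhd_def by simp
  then have "m e \<in> V" using simple_graph_edgeD[OF simple] by blast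
  then have two: "card {t\<in>Z. {m e, t} \<in> E} = 2" using skeletonD(5)[OF Z(1) _ z me] by blast
  have "{t\<in>Z. {m e, t} \<in> E} \<subseteq> e"
  proof
    fix t assume t: "t \<in> {t\<in>Z. {m e, t} \<in> E}"
    then have "m e \<in> nbhd E t" unfolding nbhd_def by simp
    then obtain e' where "e' \<in> F" "t \<in> e'" "m e = m e'" using nbhd[of t] t Z(2) by blast
    then show "t \<in> e" using inj e e_def inj_on_def by metis
  qed
  moreover have "card e = 2" using simple_graph_edgeD[OF simple_F e] e_def by simp
  ultimately have "{t\<in>Z. {m e, t} \<in> E} = e" using card_subset_eq[of e] two e_def by simp
  then show ?thesis unfolding e_def by blast
qed

lemma substructure_no_skeleton_avoiding:
  assumes T: "tree V E" and S: "substructure V E VF EF X" and v: "v \<in> X"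
  shows "\<not> (\<exists>Z. skeleton E V (X - {v}) Z)"
proof
  assume "\<exists>Z. skeleton E V (X - {v}) Z"
  then obtain Z where Z: "skeleton E V (X - {v}) Z" by blast
  obtain F m where F: "tree X F" "bij_betw m F (VF - X)" "EF = (\<Union>e\<in>F. (\<lambda>a. {a, m e}) ` e)"
    "X \<subseteq> VF" "VF \<subseteq> V" "EF \<subseteq> E" "\<forall>v\<in>X. degree E v = degree EF v"
    by (rule substructureE[OF S])
  have simple: "simple_graph V E" using treeD[OF T] by blast
  have ZX: "Z \<subseteq> X - {v}" using skeletonD(3)[OF Z] .
  have closed: "\<forall>z x'. z \<in> Z \<longrightarrow> adj F z x' \<longrightarrow> x' \<in> Z"
    using skeleton_closed_along_subdivided_edge[OF simple treeD(1)[OF F(1)]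
        bij_betw_imp_inj_on[OF F(2)] substructure_nbhd[OF simple S F(2,3)] Z]
      ZX unfolding adj_def by blast
  obtain z where z: "z \<in> Z" using skeletonD(1)[OF Z] by blast
  obtain p where p: "walk X F p" "hd p = z" "last p = v"
    using treeD(3)[OF F(1)] z ZX v unfolding connected_graph_def by blast
  then have "last p \<in> Z"
    using successively_closed_last[of "adj F" p Z] closed z unfolding walk_iff_successively by blast
  then show False using p ZX by blast
qed

section \<open>Minimal skeletons\<close>

lemma successively_conj:
  "successively P xs \<Longrightarrow> successively Q xs \<Longrightarrow> successively (\<lambda>a b. P a b \<and> Q a b) xs"
  by (simp add: successively_conv_nth)

lemma successively_inner_mem:
  assumes "r \<noteq> []"
  shows "successively (\<lambda>a b. a \<in> set r \<or> b \<in> set r) ((x # r) @ [y])"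
proof -
  have "successively (\<lambda>a b. a \<in> set r) (r' @ [y])" if "set r' \<subseteq> set r" for r'
    using that by (induction r') (auto simp: successively_Cons successively_append_iff)
  then have "successively (\<lambda>a b. a \<in> set r \<or> b \<in> set r) (r @ [y])"
    by (rule successively_mono) auto
  then show ?thesis using assms by (cases r) auto
qed

text \<open>Contracting the vertices adjacent to a minimal skeleton X of a tree yields a tree on X whose
  subdivision is a substructure.\<close>
locale minimal_skeleton =
  fixes V E Y X
  assumes tree: "tree V E" and skeleton: "skeleton E V Y X"
    and minimal: "\<And>X'. skeleton E V Y X' \<Longrightarrow> card X \<le> card X'"
begin

lemma simple: "simple_graph V E" and acyclic: "acyclic_graph V E"
  using treeD[OF tree] by blast+

lemma XV: "X \<subseteq> V" using skeletonD(2)[OF skeleton] .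

lemma finite_X: "finite X" using finite_subset[OF XV simple_graph_finite[OF simple]] .

definition branch_nbrs :: "'a \<Rightarrow> 'a set" where
  "branch_nbrs c = {x \<in> X. {c, x} \<in> E}"

definition subdiv_vertices :: "'a set" where
  "subdiv_vertices = {c \<in> V. \<exists>x\<in>X. {c, x} \<in> E}"

definition branch_edges :: "'a set set" where
  "branch_edges = {{x, x'} | x x'. x \<in> X \<and> x' \<in> X \<and> x \<noteq> x' \<and> (\<exists>c\<in>V. {c, x} \<in> E \<and> {c, x'} \<in> E)}"

definition subdiv_vertex :: "'a set \<Rightarrow> 'a" where
  "subdiv_vertex e = (SOME c. c \<in> V \<and> (\<forall>a\<in>e. {c, a} \<in> E))"

lemma subdiv_vertex_notin:
  assumes "c \<in> subdiv_vertices"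
  shows "c \<notin> X"
proof
  assume "c \<in> X"
  obtain x where "x \<in> X" "{c, x} \<in> E" using assms unfolding subdiv_vertices_def by blast
  then show False using skeletonD(4)[OF skeleton \<open>c \<in> X\<close>] by blast
qed

lemma card_branch_nbrs:
  assumes "c \<in> subdiv_vertices"
  shows "card (branch_nbrs c) = 2"
proof -
  obtain x where "c \<in> V" "x \<in> X" "{c, x} \<in> E" using assms unfolding subdiv_vertices_def by blast
  then show ?thesis unfolding branch_nbrs_def by (rule skeletonD(5)[OF skeleton])
qed

text \<open>Two common neighbours of x and x' would close a cycle.\<close>
lemma common_neighbour_unique:
  assumes x: "x \<in> X" "x' \<in> X" "x \<noteq> x'" and c: "c \<in> V" "{c, x} \<in> E" "{c, x'} \<in> E"
    and c': "c' \<in> V" "{c', x} \<in> E" "{c', x'} \<in> E"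
  shows "c = c'"
proof (rule ccontr)
  assume "c \<noteq> c'"
  moreover have "c \<notin> X" using subdiv_vertex_notin c x unfolding subdiv_vertices_def by blast
  ultimately have "walk (V - {c}) E [x, c', x']"
    unfolding walk_iff_successively using x c' XV by (auto simp: adj_def insert_commute)
  then have "reachable (V - {c}) E x x'" unfolding reachable_def by force
  then show False
    using acyclic_no_detour[OF acyclic, of "V - {c}" c x x'] c x by (auto simp: insert_commute)
qed

lemma branch_edgeI:
  "x \<in> X \<Longrightarrow> x' \<in> X \<Longrightarrow> x \<noteq> x' \<Longrightarrow> c \<in> V \<Longrightarrow> {c, x} \<in> E \<Longrightarrow> {c, x'} \<in> E \<Longrightarrow>
   {x, x'} \<in> branch_edges"
  unfolding branch_edges_def by auto

lemma branch_edgeE: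
  assumes "e \<in> branch_edges"
  obtains x x' c where "e = {x, x'}" "x \<in> X" "x' \<in> X" "x \<noteq> x'" "c \<in> V" "{c, x} \<in> E" "{c, x'} \<in> E"
  using assms unfolding branch_edges_def by blast

lemma branch_edge_subset: "e \<in> branch_edges \<Longrightarrow> e \<subseteq> X"
  by (elim branch_edgeE) auto

lemma subdiv_vertex:
  assumes "e \<in> branch_edges"
  shows "subdiv_vertex e \<in> V" "\<forall>a\<in>e. {subdiv_vertex e, a} \<in> E"
proof -
  obtain x x' c where "e = {x, x'}" "c \<in> V" "{c, x} \<in> E" "{c, x'} \<in> E"
    using assms by (elim branch_edgeE)
  then have "\<exists>c. c \<in> V \<and> (\<forall>a\<in>e. {c, a} \<in> E)" by blast
  then have "subdiv_vertex e \<in> V \<and> (\<forall>a\<in>e. {subdiv_vertex e, a} \<in> E)"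
    unfolding subdiv_vertex_def by (rule someI_ex)
  then show "subdiv_vertex e \<in> V" "\<forall>a\<in>e. {subdiv_vertex e, a} \<in> E" by auto
qed

lemma subdiv_vertex_in:
  assumes "e \<in> branch_edges"
  shows "subdiv_vertex e \<in> subdiv_vertices"
proof -
  obtain x x' c where "e = {x, x'}" "x \<in> X" using assms by (elim branch_edgeE)
  then show ?thesis unfolding subdiv_vertices_def using subdiv_vertex[OF assms] by blast
qed

lemma branch_nbrs_subdiv_vertex:
  assumes e: "e \<in> branch_edges"
  shows "branch_nbrs (subdiv_vertex e) = e"
proof -
  obtain x x' c where ex: "e = {x, x'}" "x \<noteq> x'" using e by (elim branch_edgeE)
  have "e \<subseteq> branch_nbrs (subdiv_vertex e)"
    unfolding branch_nbrs_def using branch_edge_subset[OF e] subdiv_vertex(2)[OF e] by blast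
  moreover have "card e = 2" using ex by simp
  moreover have "card (branch_nbrs (subdiv_vertex e)) = 2"
    using card_branch_nbrs[OF subdiv_vertex_in[OF e]] .
  moreover have "finite (branch_nbrs (subdiv_vertex e))" unfolding branch_nbrs_def
    using finite_X by simp
  ultimately show ?thesis using card_subset_eq[of "branch_nbrs (subdiv_vertex e)" e] by simp
qed

lemma inj_subdiv_vertex: "inj_on subdiv_vertex branch_edges"
  by (metis branch_nbrs_subdiv_vertex inj_onI)

lemma subdiv_vertex_image: "subdiv_vertex ` branch_edges = subdiv_vertices"
proof
  show "subdiv_vertex ` branch_edges \<subseteq> subdiv_vertices" using subdiv_vertex_in by blast
  show "subdiv_vertices \<subseteq> subdiv_vertex ` branch_edges"
  proof
    fix c assume c: "c \<in> subdiv_vertices"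
    then have cV: "c \<in> V" unfolding subdiv_vertices_def by blast
    obtain x x' where xx: "branch_nbrs c = {x, x'}" "x \<noteq> x'"
      using card_branch_nbrs[OF c] card_2_iff by metis
    have x: "x \<in> X" "x' \<in> X" "{c, x} \<in> E" "{c, x'} \<in> E" using xx unfolding branch_nbrs_def by blast+
    then have e: "{x, x'} \<in> branch_edges" using branch_edgeI xx(2) cV by blast
    have "subdiv_vertex {x, x'} = c"
      using common_neighbour_unique[OF x(1,2) xx(2) subdiv_vertex(1)[OF e] _ _ cV x(3,4)]
        subdiv_vertex(2)[OF e] by blast
    then show "c \<in> subdiv_vertex ` branch_edges" using e by blast
  qed
qed

definition subdivision_edges :: "'a set set" where
  "subdivision_edges = (\<Union>e\<in>branch_edges. (\<lambda>a. {a, subdiv_vertex e}) ` e)"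

lemma bij_subdiv_vertex: "bij_betw subdiv_vertex branch_edges (X \<union> subdiv_vertices - X)"
proof -
  have "X \<union> subdiv_vertices - X = subdiv_vertices" using subdiv_vertex_notin by blast
  then show ?thesis using inj_subdiv_vertex subdiv_vertex_image by (simp add: bij_betw_def)
qed

lemma subdivision_edges_subset: "subdivision_edges \<subseteq> E"
proof
  fix s assume "s \<in> subdivision_edges"
  then obtain e a where ea: "e \<in> branch_edges" "a \<in> e" "s = {a, subdiv_vertex e}"
    unfolding subdivision_edges_def by blast
  then show "s \<in> E" using subdiv_vertex(2)[OF ea(1)] by (simp add: insert_commute)
qed

lemma nbhd_subdivision_edges:
  assumes x: "x \<in> X"
  shows "nbhd subdivision_edges x = nbhd E x"
proof -
  have "nbhd subdivision_edges x = subdiv_vertex ` {e\<in>branch_edges. x \<in> e}"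
    using subdivided_nbhd[OF bij_subdiv_vertex subdivision_edges_def x] .
  also have "\<dots> = nbhd E x"
  proof
    show "subdiv_vertex ` {e\<in>branch_edges. x \<in> e} \<subseteq> nbhd E x"
      unfolding nbhd_def using subdiv_vertex(2) by blast
    show "nbhd E x \<subseteq> subdiv_vertex ` {e\<in>branch_edges. x \<in> e}"
    proof
      fix u assume "u \<in> nbhd E x"
      then have ux: "{u, x} \<in> E" unfolding nbhd_def by simp
      then have uV: "u \<in> V" using simple_graph_edgeD[OF simple] by blast
      then have "u \<in> subdiv_vertices" unfolding subdiv_vertices_def using ux x by blast
      moreover have "x \<in> branch_nbrs u" unfolding branch_nbrs_def using ux x by blast
      ultimately obtain x' where x': "x' \<in> branch_nbrs u" "x' \<noteq> x"
        using card_branch_nbrs card_2_iff' by metis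
      then have x'X: "x' \<in> X" "{u, x'} \<in> E" unfolding branch_nbrs_def by blast+
      then have e: "{x, x'} \<in> branch_edges" using branch_edgeI x x'(2) uV ux by metis
      have "subdiv_vertex {x, x'} = u"
        using common_neighbour_unique[OF x x'X(1) x'(2)[symmetric] subdiv_vertex(1)[OF e] _ _
            uV ux x'X(2)]
          subdiv_vertex(2)[OF e] by blast
      then show "u \<in> subdiv_vertex ` {e\<in>branch_edges. x \<in> e}" using e by blast
    qed
  qed
  finally show ?thesis .
qed

lemma simple_branch_edges: "simple_graph X branch_edges"
  unfolding simple_graph_def
proof (intro conjI ballI)
  show "finite X" by (rule finite_X)
  fix e assume "e \<in> branch_edges"
  then show "\<exists>u v. e = {u, v} \<and> u \<noteq> v \<and> u \<in> X \<and> v \<in> X" by (elim branch_edgeE) blast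
qed

text \<open>The component of x in the contracted graph is itself a skeleton, so by minimality it is
  all of X.\<close>
lemma branch_component_skeleton:
  assumes x: "x \<in> X"
  shows "skeleton E V Y {t \<in> X. reachable X branch_edges x t}"
proof -
  define R where "R = {t \<in> X. reachable X branch_edges x t}"
  have RX: "R \<subseteq> X" unfolding R_def by blast
  have "{z \<in> R. {m, z} \<in> E} = branch_nbrs m" if m: "m \<in> V" and t: "t \<in> R" "{m, t} \<in> E" for m t
  proof
    show "{z \<in> R. {m, z} \<in> E} \<subseteq> branch_nbrs m" unfolding branch_nbrs_def using RX by blast
    show "branch_nbrs m \<subseteq> {z \<in> R. {m, z} \<in> E}"
    proof
      fix z assume "z \<in> branch_nbrs m"
      then have z: "z \<in> X" "{m, z} \<in> E" unfolding branch_nbrs_def by blast+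
      have "reachable X branch_edges x z" if "z \<noteq> t"
      proof -
        have "t \<in> X" "reachable X branch_edges x t" using t(1) unfolding R_def by blast+
        moreover have "{t, z} \<in> branch_edges"
          using branch_edgeI[OF _ z(1) _ m t(2) z(2)] that \<open>t \<in> X\<close> by metis
        ultimately show ?thesis using reachable_step z(1) by metis
      qed
      then show "z \<in> {z \<in> R. {m, z} \<in> E}" using t z unfolding R_def by blast
    qed
  qed
  moreover have "m \<in> subdiv_vertices" if "m \<in> V" "t \<in> R" "{m, t} \<in> E" for m t
    using that RX unfolding subdiv_vertices_def by blast
  ultimately have count: "\<forall>m\<in>V. (\<exists>t\<in>R. {m, t} \<in> E) \<longrightarrow> card {z \<in> R. {m, z} \<in> E} = 2"
    using card_branch_nbrs by metis
  have "x \<in> R" unfolding R_def using x reachable_refl[OF x] by blast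
  moreover have "R \<subseteq> V" "R \<subseteq> Y" using RX XV skeletonD(3)[OF skeleton] by blast+
  moreover have "\<forall>a\<in>R. \<forall>b\<in>R. {a, b} \<notin> E" using RX skeletonD(4)[OF skeleton] by blast
  ultimately show ?thesis using count unfolding skeleton_def R_def[symmetric] by blast
qed

lemma connected_branch_edges: "connected_graph X branch_edges"
  unfolding connected_graph_def
proof (intro conjI ballI)
  show "X \<noteq> {}" using skeletonD(1)[OF skeleton] .
  fix u v assume u: "u \<in> X" and v: "v \<in> X"
  let ?R = "{t \<in> X. reachable X branch_edges u t}"
  have "card X \<le> card ?R" using minimal[OF branch_component_skeleton[OF u]] .
  then have "?R = X" using card_subset_eq[OF finite_X, of ?R] card_mono[OF finite_X, of ?R] by auto
  then show "\<exists>p. walk X branch_edges p \<and> hd p = u \<and> last p = v"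
    using v unfolding reachable_def by blast
qed

lemma reachable_lift:
  assumes "successively (\<lambda>a b. adj branch_edges a b \<and> subdiv_vertex {a, b} \<noteq> g) q"
    and "set q \<subseteq> X" "q \<noteq> []" "g \<notin> X"
  shows "reachable (V - {g}) E (hd q) (last q)"
  using assms(1-3)
proof (induction q rule: induct_list012)
  case (2 x)
  then have "x \<in> V - {g}" using XV assms(4) by auto
  then show ?case by (simp add: reachable_refl)
next
  case (3 a b r)
  have e: "{a, b} \<in> branch_edges" "subdiv_vertex {a, b} \<noteq> g"
    using "3.prems"(1) by (simp_all add: adj_def)
  have ab: "a \<in> V - {g}" "b \<in> V - {g}" using "3.prems"(2) XV assms(4) by auto
  let ?c = "subdiv_vertex {a, b}"
  have c: "?c \<in> V - {g}" "{?c, a} \<in> E" "{?c, b} \<in> E"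
    using subdiv_vertex[OF e(1)] e(2) by blast+
  have "reachable (V - {g}) E a ?c"
    using reachable_step[OF reachable_refl[OF ab(1)] c(1)] c(2) insert_commute[of a ?c] by metis
  then have "reachable (V - {g}) E a b" by (rule reachable_step[OF _ ab(2) c(3)])
  moreover have "successively (\<lambda>a b. adj branch_edges a b \<and> subdiv_vertex {a, b} \<noteq> g) (b # r)"
    using "3.prems"(1) by simp
  then have "reachable (V - {g}) E b (last (b # r))" using "3.IH"(2) "3.prems"(2) by simp
  ultimately show ?case using reachable_trans[of "V - {g}" E a b] by simp
qed simp

lemma acyclic_branch_edges: "acyclic_graph X branch_edges"
  unfolding acyclic_graph_def
proof
  assume "\<exists>c. is_cycle X branch_edges c"
  then obtain c where c: "is_cycle X branch_edges c" by blast
  have cc: "length c \<ge> 3" "distinct c" "set c \<subseteq> X" "successively (adj branch_edges) c"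
    "adj branch_edges (last c) (hd c)"
    using c unfolding is_cycle_def walk_iff_successively by auto
  obtain x1 x2 r where c12: "c = x1 # x2 # r" "r \<noteq> []"
  proof (cases c)
    case (Cons x1 c')
    then obtain x2 r where "c' = x2 # r" using cc(1) by (cases c') auto
    then show ?thesis using that[of x1 x2 r] Cons cc(1) by (cases r) auto
  qed (use cc(1) in simp)
  have e12: "{x1, x2} \<in> branch_edges" using cc(4) c12 by (simp add: adj_def)
  define g where "g = subdiv_vertex {x1, x2}"
  have g: "g \<in> V" "{g, x1} \<in> E" "{g, x2} \<in> E" "g \<notin> X"
    using subdiv_vertex[OF e12] subdiv_vertex_notin[OF subdiv_vertex_in[OF e12]] g_def by auto
  have x12: "x1 \<noteq> x2" "x1 \<notin> set r" "x2 \<notin> set r" using cc(2) c12 by auto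
  define q where "q = (x2 # r) @ [x1]"
  have "successively (adj branch_edges) q"
    unfolding q_def successively_append_iff using cc(4,5) c12 by auto
  moreover have "successively (\<lambda>a b. a \<in> set r \<or> b \<in> set r) q"
    unfolding q_def using successively_inner_mem[OF c12(2)] .
  ultimately have "successively (\<lambda>a b. adj branch_edges a b \<and> subdiv_vertex {a, b} \<noteq> g) q"
  proof (rule successively_mono[OF successively_conj])
    fix a b assume ab: "adj branch_edges a b \<and> (a \<in> set r \<or> b \<in> set r)"
    then have "{a, b} \<noteq> {x1, x2}" using x12 by (auto simp: doubleton_eq_iff)
    then have "subdiv_vertex {a, b} \<noteq> g"
      using ab inj_subdiv_vertex e12 g_def unfolding adj_def by (metis inj_onD)
    then show "adj branch_edges a b \<and> subdiv_vertex {a, b} \<noteq> g" using ab by blast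
  qed
  then have "reachable (V - {g}) E x2 x1"
    using reachable_lift[of g q] cc(3) c12 g(4) q_def by auto
  then show False using acyclic_no_detour[OF acyclic, of "V - {g}" g x2 x1] g x12(1)
    by (auto simp: insert_commute)
qed

lemma substructure: "substructure V E (X \<union> subdiv_vertices) subdivision_edges X"
  unfolding substructure_def subdivided_tree_def
proof (intro conjI)
  show "\<exists>E' m. tree X E' \<and> bij_betw m E' (X \<union> subdiv_vertices - X) \<and>
      subdivision_edges = (\<Union>e\<in>E'. (\<lambda>a. {a, m e}) ` e)"
    using simple_branch_edges connected_branch_edges acyclic_branch_edges bij_subdiv_vertex
      subdivision_edges_def
    unfolding tree_def by blast
  show "X \<union> subdiv_vertices \<subseteq> V" unfolding subdiv_vertices_def using XV by blast
  show "\<forall>v\<in>X. degree E v = degree subdivision_edges v"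
    using nbhd_subdivision_edges unfolding degree_def by simp
qed (use subdivision_edges_subset in auto)

end

section \<open>Critical trees\<close>

text \<open>Staller wins, so there is a skeleton outside D; a minimal one is the branch vertex set of
  a substructure, and criticality forces it to contain every vertex outside D.\<close>
lemma substructure_if_mbd_critical:
  assumes T: "tree V E" and DV: "D \<subseteq> V" and crit: "mbd_critical V E D"
  shows "\<exists>VF EF X. substructure V E VF EF X \<and> D = V - X"
proof -
  have simple: "simple_graph V E" and acyclic: "acyclic_graph V E" using treeD[OF T] by blast+
  have "staller_wins V E D" using crit unfolding mbd_critical_def by blast
  then obtain X1 where "skeleton E V (V - D) X1"
    using dominator_wins_if_no_skeleton[OF simple acyclic] by blast
  then obtain X where X: "skeleton E V (V - D) X"
    and min: "\<And>X'. skeleton E V (V - D) X' \<Longrightarrow> card X \<le> card X'"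
    using ex_has_least_nat[of "skeleton E V (V - D)" X1 card] by blast
  interpret minimal_skeleton V E "V - D" X using T X min by unfold_locales
  have "v \<in> X" if v: "v \<in> V - D" for v
  proof (rule ccontr)
    assume "v \<notin> X"
    then have "X \<inter> insert v D = {}" using skeletonD(3)[OF X] by blast
    then have "staller_wins V E (insert v D)"
      by (rule staller_wins_if_substructure[OF T substructure])
    then show False using crit v unfolding mbd_critical_def by blast
  qed
  then have "D = V - X" using skeletonD(3)[OF X] DV by blast
  then show ?thesis using substructure by blast
qed

lemma mbd_critical_if_substructure:
  assumes T: "tree V E" and S: "substructure V E VF EF X" and D: "D = V - X"
  shows "mbd_critical V E D"
proof -
  have simple: "simple_graph V E" and acyclic: "acyclic_graph V E" using treeD[OF T] by blast+
  have XV: "X \<subseteq> V" using S unfolding substructure_def subdivided_tree_def by blast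
  have "\<not> staller_wins V E (insert v D)" if "v \<in> V - D" for v
  proof -
    have "V - insert v D = X - {v}" using D XV by blast
    then show ?thesis
      using dominator_wins_if_no_skeleton[OF simple acyclic]
        substructure_no_skeleton_avoiding[OF T S] that D by auto
  qed
  moreover have "staller_wins V E D" using staller_wins_if_substructure[OF T S] D by blast
  ultimately show "mbd_critical V E D" unfolding mbd_critical_def by blast
qed

lemma mbd_critical_iff_substructure:
  assumes "tree V E" "D \<subseteq> V"
  shows "mbd_critical V E D \<longleftrightarrow> (\<exists>VF EF X. substructure V E VF EF X \<and> D = V - X)"
  using substructure_if_mbd_critical[OF assms] mbd_critical_if_substructure[OF assms(1)] by blast

lemma substructure_vertices_eq:
  assumes T: "tree V E" and S: "substructure V E VF EF X"
    and indep: "\<forall>u\<in>V - X. \<forall>v\<in>V - X. {u, v} \<notin> E"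
  shows "VF = V"
proof (rule ccontr)
  assume "VF \<noteq> V"
  obtain F m where F: "tree X F" "bij_betw m F (VF - X)" "EF = (\<Union>e\<in>F. (\<lambda>a. {a, m e}) ` e)"
    "X \<subseteq> VF" "VF \<subseteq> V" "EF \<subseteq> E" "\<forall>v\<in>X. degree E v = degree EF v"
    by (rule substructureE[OF S])
  have simple: "simple_graph V E" using treeD[OF T] by blast
  obtain w where w: "w \<in> V - VF" using F(5) \<open>VF \<noteq> V\<close> by blast
  obtain x where x: "x \<in> X" using treeD(3)[OF F(1)] unfolding connected_graph_def by blast
  then obtain p where p: "walk V E p" "hd p = w" "last p = x"
    using treeD(3)[OF T] w F(4,5) unfolding connected_graph_def by blast
  have "last p \<notin> V - VF" using p x F(4) by blast
  then obtain a b where ab: "a \<in> V - VF" "{a, b} \<in> E" "b \<notin> V - VF"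
    using successively_closed_last[of "adj E" p "V - VF"] p w
    unfolding walk_iff_successively adj_def by blast
  then have b: "b \<in> VF" using simple_graph_edgeD[OF simple ab(2)] by blast
  show False
  proof (cases "b \<in> X")
    case True
    have "a \<in> nbhd E b" unfolding nbhd_def using ab(2) by simp
    then have "a \<in> m ` {e\<in>F. b \<in> e}" using substructure_nbhd[OF simple S F(2,3) True] by blast
    then show False using bij_betw_imp_surj_on[OF F(2)] ab(1) by blast
  next
    case False
    then show False using indep ab b F(4,5) by blast
  qed
qed

lemma substructure_edges_eq:
  assumes simple: "simple_graph V E" and S: "substructure V E VF EF X"
    and indep: "\<forall>u\<in>V - X. \<forall>v\<in>V - X. {u, v} \<notin> E"
  shows "EF = E"
proof
  show "EF \<subseteq> E" using S unfolding substructure_def by blast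
  have same: "nbhd E x = nbhd EF x" if "x \<in> X" for x
    using nbhd_eq_if_degree_eq[OF simple] S that unfolding substructure_def by blast
  show "E \<subseteq> EF"
  proof
    fix e assume e: "e \<in> E"
    then obtain a b where ab: "e = {a, b}" "a \<in> V" "b \<in> V"
      using simple unfolding simple_graph_def by meson
    then consider "a \<in> X" | "b \<in> X" using indep e by blast
    then show "e \<in> EF"
    proof cases
      case 1
      have "b \<in> nbhd E a" unfolding nbhd_def using e ab(1) by (simp add: insert_commute)
      then have "b \<in> nbhd EF a" using same[OF 1] by simp
      then show ?thesis using ab(1) unfolding nbhd_def by (simp add: insert_commute)
    next
      case 2
      have "a \<in> nbhd E b" unfolding nbhd_def using e ab(1) by simp
      then have "a \<in> nbhd EF b" using same[OF 2] by simp
      then show ?thesis using ab(1) unfolding nbhd_def by simp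
    qed
  qed
qed

lemma subdivided_tree_subdivision_vertices:
  assumes "subdivided_tree V E X"
  shows "\<forall>u\<in>V - X. \<forall>v\<in>V - X. {u, v} \<notin> E" "\<forall>d\<in>V - X. \<exists>u. {u, d} \<in> E"
proof -
  obtain F m where F: "tree X F" "bij_betw m F (V - X)" "E = (\<Union>e\<in>F. (\<lambda>a. {a, m e}) ` e)"
    using assms unfolding subdivided_tree_def by (elim conjE exE)
  have simple_F: "simple_graph X F" using treeD[OF F(1)] by blast
  show "\<forall>u\<in>V - X. \<forall>v\<in>V - X. {u, v} \<notin> E"
  proof (intro ballI notI)
    fix u v assume uv: "u \<in> V - X" "v \<in> V - X" "{u, v} \<in> E"
    then obtain e a where "e \<in> F" "a \<in> e" "{u, v} = {a, m e}" using F(3) by blast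
    then have "a \<in> X" "u = a \<or> v = a"
      using simple_graph_edge_subset[OF simple_F] by (auto simp: doubleton_eq_iff)
    then show False using uv by blast
  qed
  show "\<forall>d\<in>V - X. \<exists>u. {u, d} \<in> E"
  proof
    fix d assume "d \<in> V - X"
    then obtain e where e: "e \<in> F" "d = m e" using bij_betw_imp_surj_on[OF F(2)] by blast
    then obtain x y where "e = {x, y}" using simple_F unfolding simple_graph_def by meson
    then have "{x, d} \<in> E" using F(3) e by blast
    then show "\<exists>u. {u, d} \<in> E" by blast
  qed
qed

lemma atomic_mbd_critical_iff_subdivided_tree:
  assumes T: "tree V E" and DV: "D \<subseteq> V"
  shows "atomic_mbd_critical V E D \<longleftrightarrow> (\<exists>X. subdivided_tree V E X \<and> D = V - X)"
proof
  assume atomic: "atomic_mbd_critical V E D"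
  then obtain VF EF X where S: "substructure V E VF EF X" and D: "D = V - X"
    using mbd_critical_iff_substructure[OF T DV] unfolding atomic_mbd_critical_def by blast
  have indep: "\<forall>u\<in>V - X. \<forall>v\<in>V - X. {u, v} \<notin> E"
    using atomic D unfolding atomic_mbd_critical_def by blast
  have "VF = V" by (rule substructure_vertices_eq[OF T S indep])
  moreover have "EF = E" by (rule substructure_edges_eq[OF treeD(1)[OF T] S indep])
  ultimately have "subdivided_tree V E X" using S unfolding substructure_def by blast
  then show "\<exists>X. subdivided_tree V E X \<and> D = V - X" using D by blast
next
  assume "\<exists>X. subdivided_tree V E X \<and> D = V - X"
  then obtain X where X: "subdivided_tree V E X" and D: "D = V - X" by blast
  have "substructure V E V E X" unfolding substructure_def using X by blast
  then have "mbd_critical V E D" using mbd_critical_iff_substructure[OF T DV] D by blast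
  then show "atomic_mbd_critical V E D"
    unfolding atomic_mbd_critical_def using subdivided_tree_subdivision_vertices[OF X] D by blast
qed

theorem theorem4p6:
  fixes V :: "'a set" and E :: "'a set set" and D :: "'a set"
  assumes "tree V E" and "D \<subseteq> V"
  shows "(mbd_critical V E D \<longleftrightarrow> (\<exists>VF EF X. substructure V E VF EF X \<and> D = V - X))
     \<and> (atomic_mbd_critical V E D \<longleftrightarrow> (\<exists>X. subdivided_tree V E X \<and> D = V - X))"
  using mbd_critical_iff_substructure[OF assms] atomic_mbd_critical_iff_subdivided_tree[OF assms]
  by blast
end
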